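(* Let $T$ be an attack-defence tree and $\llbracket T\rrbracket$ its encoding in the rewrite theory $\mathcal{R}_{ADT}$ described in the context. If the minimal time to perform the main (root) attack in $T$ is $t$, then there exist $a$, $SA$ and $SD$ such that $\mathcal{R}_{ADT} \vdash \llbracket T\rrbracket \to^{!} [a,t,SA,SD]$.
   Context: An attack-defence tree (ADTree) $T$ is a tree whose leaves are attack actions (each with a time and a cost) or defence actions, and whose inner nodes are gates: OR (unordered children, succeeds iff some child succeeds), AND (unordered children in parallel, succeeds iff all succeed), SAND (ordered children executed sequentially), and NOT (single child, succeeds iff the child fails; encodes counter-defence gates). Gates may carry their own time and cost. The time of an attack on the root is computed bottom-up: maximum over AND children, sum over SAND children, the chosen child for OR, plus each gate's own time. Rewrite theory $\mathcal{R}_{ADT}$: each node is an object with attributes time, cost, agents (1 for attack leaves, 0 for gates), accumulated time acctime and cost (initially 0), a set used, its children, and a status in $\{\mathrm{Unknown},\mathrm{Succeed},\mathrm{Fail}\}$ initially Unknown; $\llbracket T\rrbracket=\{Q;Cnf\}$ with $Q$ the root and $Cnf$ the multiset of node objects. Rules: Unknown attack/defence leaves may become Succeed or Fail. OR: a Succeed pending child $o$ makes the Unknown gate Succeed, empties its pending children, records $o$ in used, sets acctime/cost to the gate's own plus $o$'s accumulated values and agents to $o$'s; Fail children are removed; no pending children makes it Fail. AND: Succeed children are removed from pending and recorded, acctime combined by max and agents by sum; a Fail child makes it Fail; no pending children makes it Succeed. SAND: a Succeed first child is removed and recorded, acctime combined by sum and agents by max; failing first child gives Fail; empty list gives Succeed.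 NOT: child Succeed gives Fail, child Fail gives Succeed. END: when the root is Succeed, $\{Q;Cnf\}$ rewrites to the summary term $[a,t,SA,SD]$ of the root's agents $a$, accumulated time $t$, the set $SA$ of used attacks and the set $SD$ of active defences. $\mathcal{R}\vdash u\to^{!}u'$ means $u$ rewrites in zero or more steps to an irreducible $u'$. *)

theory Defs
  imports Main
begin

type_synonym name = nat

text \<open>Leaves: attack actions (name, time, cost) and defence actions (name).
  Gates: OR, AND, SAND with their own time and cost and a list of children,
  NOT (counter-defence gate) with own time and cost and a single child.\<close>
datatype adt =
    Atk name nat nat
  | Dfn name
  | Or nat nat "adt list"
  | And nat nat "adt list"
  | Sand nat nat "adt list"
  | Not nat nat adt

text \<open>\<open>succ T t\<close>: the root of \<open>T\<close> can be achieved by an attack of time \<open>t\<close>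
  (for some outcome of the leaves); \<open>fails T\<close>: the root of \<open>T\<close> can fail.\<close>
inductive succ :: "adt \<Rightarrow> nat \<Rightarrow> bool" and fails :: "adt \<Rightarrow> bool" where
  succ_atk: "succ (Atk n t c) t"
| fails_atk: "fails (Atk n t c)"
| succ_dfn: "succ (Dfn n) 0"
| fails_dfn: "fails (Dfn n)"
| succ_or: "i < length cs \<Longrightarrow> succ (cs ! i) ti \<Longrightarrow> succ (Or t c cs) (t + ti)"
| fails_or: "(\<forall>i < length cs. fails (cs ! i)) \<Longrightarrow> fails (Or t c cs)"
| succ_and: "length ts = length cs \<Longrightarrow> (\<forall>i < length cs. succ (cs ! i) (ts ! i))
     \<Longrightarrow> succ (And t c cs) (t + fold max ts 0)"
| fails_and: "i < length cs \<Longrightarrow> fails (cs ! i) \<Longrightarrow> fails (And t c cs)"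
| succ_sand: "length ts = length cs \<Longrightarrow> (\<forall>i < length cs. succ (cs ! i) (ts ! i))
     \<Longrightarrow> succ (Sand t c cs) (t + sum_list ts)"
| fails_sand: "i < length cs \<Longrightarrow> fails (cs ! i) \<Longrightarrow> fails (Sand t c cs)"
| succ_not: "fails x \<Longrightarrow> succ (Not t c x) t"
| fails_not: "succ x tx \<Longrightarrow> fails (Not t c x)"

definition min_attack_time :: "adt \<Rightarrow> nat \<Rightarrow> bool" where
  "min_attack_time T t \<longleftrightarrow> succ T t \<and> (\<forall>t'. succ T t' \<longrightarrow> t \<le> t')"

datatype status = Unknown | Succeed | Fail

datatype kind = KAtk name | KDfn name | KOr | KAnd | KSand | KNot

text \<open>A node object: kind, time, cost, agents, acctime, acccost, used (attacks used),
  active defences, status, its children (objects, indexed by position = object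
  identifier relative to the parent) and the pending children (list of indices).\<close>
datatype obj = Obj
  (okind: kind) (otime: nat) (ocost: nat) (oagents: nat) (oacctime: nat) (oacccost: nat)
  (oused: "name set") (odefs: "name set") (ostatus: status)
  (ochildren: "obj list") (opending: "nat list")

fun enc :: "adt \<Rightarrow> obj" where
  "enc (Atk n t c) = Obj (KAtk n) t c 1 0 0 {} {} Unknown [] []"
| "enc (Dfn n) = Obj (KDfn n) 0 0 0 0 0 {} {} Unknown [] []"
| "enc (Or t c cs) = Obj KOr t c 0 0 0 {} {} Unknown (map enc cs) [0..<length cs]"
| "enc (And t c cs) = Obj KAnd t c 0 0 0 {} {} Unknown (map enc cs) [0..<length cs]"
| "enc (Sand t c cs) = Obj KSand t c 0 0 0 {} {} Unknown (map enc cs) [0..<length cs]"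
| "enc (Not t c x) = Obj KNot t c 0 0 0 {} {} Unknown [enc x] [0]"

inductive node_step :: "obj \<Rightarrow> obj \<Rightarrow> bool" where
  atk_succ: "node_step (Obj (KAtk n) t c a at ac u d Unknown ch p)
                       (Obj (KAtk n) t c a t c {n} d Succeed ch p)"
| atk_fail: "node_step (Obj (KAtk n) t c a at ac u d Unknown ch p)
                       (Obj (KAtk n) t c a at ac u d Fail ch p)"
| dfn_succ: "node_step (Obj (KDfn n) t c a at ac u d Unknown ch p)
                       (Obj (KDfn n) t c a at ac u {n} Succeed ch p)"
| dfn_fail: "node_step (Obj (KDfn n) t c a at ac u d Unknown ch p)
                       (Obj (KDfn n) t c a at ac u d Fail ch p)"
| or_succ: "i \<in> set p \<Longrightarrow> i < length ch \<Longrightarrow> ostatus (ch ! i) = Succeed \<Longrightarrow>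
     node_step (Obj KOr t c a at ac u d Unknown ch p)
       (Obj KOr t c (oagents (ch ! i)) (t + oacctime (ch ! i)) (c + oacccost (ch ! i))
            (oused (ch ! i)) (odefs (ch ! i)) Succeed ch [])"
| or_rm: "i \<in> set p \<Longrightarrow> i < length ch \<Longrightarrow> ostatus (ch ! i) = Fail \<Longrightarrow>
     node_step (Obj KOr t c a at ac u d Unknown ch p)
       (Obj KOr t c a at ac u d Unknown ch (removeAll i p))"
| or_fail: "node_step (Obj KOr t c a at ac u d Unknown ch [])
       (Obj KOr t c a at ac u d Fail ch [])"
| and_rm: "i \<in> set p \<Longrightarrow> i < length ch \<Longrightarrow> ostatus (ch ! i) = Succeed \<Longrightarrow>
     node_step (Obj KAnd t c a at ac u d Unknown ch p)
       (Obj KAnd t c (a + oagents (ch ! i)) (max at (oacctime (ch ! i))) (ac + oacccost (ch ! i))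
            (u \<union> oused (ch ! i)) (d \<union> odefs (ch ! i)) Unknown ch (removeAll i p))"
| and_fail: "i \<in> set p \<Longrightarrow> i < length ch \<Longrightarrow> ostatus (ch ! i) = Fail \<Longrightarrow>
     node_step (Obj KAnd t c a at ac u d Unknown ch p)
       (Obj KAnd t c a at ac u d Fail ch p)"
| and_succ: "node_step (Obj KAnd t c a at ac u d Unknown ch [])
       (Obj KAnd t c a (t + at) (c + ac) u d Succeed ch [])"
| sand_rm: "i < length ch \<Longrightarrow> ostatus (ch ! i) = Succeed \<Longrightarrow>
     node_step (Obj KSand t c a at ac u d Unknown ch (i # p))
       (Obj KSand t c (max a (oagents (ch ! i))) (at + oacctime (ch ! i)) (ac + oacccost (ch ! i))
            (u \<union> oused (ch ! i)) (d \<union> odefs (ch ! i)) Unknown ch p)"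
| sand_fail: "i < length ch \<Longrightarrow> ostatus (ch ! i) = Fail \<Longrightarrow>
     node_step (Obj KSand t c a at ac u d Unknown ch (i # p))
       (Obj KSand t c a at ac u d Fail ch (i # p))"
| sand_succ: "node_step (Obj KSand t c a at ac u d Unknown ch [])
       (Obj KSand t c a (t + at) (c + ac) u d Succeed ch [])"
| not_fail: "ostatus x = Succeed \<Longrightarrow>
     node_step (Obj KNot t c a at ac u d Unknown [x] p)
       (Obj KNot t c a at ac u d Fail [x] p)"
| not_succ: "ostatus x = Fail \<Longrightarrow>
     node_step (Obj KNot t c a at ac u d Unknown [x] p)
       (Obj KNot t c 0 t c {} d Succeed [x] p)"

inductive obj_step :: "obj \<Rightarrow> obj \<Rightarrow> bool" where
  here: "node_step o1 o2 \<Longrightarrow> obj_step o1 o2"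
| inside: "i < length ch \<Longrightarrow> obj_step (ch ! i) x' \<Longrightarrow>
     obj_step (Obj k t c a at ac u d s ch p) (Obj k t c a at ac u d s (ch[i := x']) p)"

text \<open>Top-level terms: a configuration \<open>{Q;Cnf}\<close> or a summary \<open>[a,t,SA,SD]\<close>.\<close>
datatype rterm = Conf obj | Summary nat nat "name set" "name set"

inductive rstep :: "rterm \<Rightarrow> rterm \<Rightarrow> bool" where
  conf: "obj_step o1 o2 \<Longrightarrow> rstep (Conf o1) (Conf o2)"
| END: "ostatus q = Succeed \<Longrightarrow>
     rstep (Conf q) (Summary (oagents q) (oacctime q) (oused q) (odefs q))"

definition encode :: "adt \<Rightarrow> rterm" where
  "encode T = Conf (enc T)"

text \<open>\<open>u \<rightarrow>! u'\<close>: rewriting in zero or more steps to an irreducible term.\<close>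
definition rewrites_nf :: "rterm \<Rightarrow> rterm \<Rightarrow> bool" where
  "rewrites_nf u u' \<longleftrightarrow> rstep\<^sup>*\<^sup>* u u' \<and> (\<nexists>v. rstep u' v)"

end

(*
  By induction on the tree: whenever the bottom-up semantics lets the root succeed with time t,
  the encoding rewrites to a configuration whose root has status Succeed and accumulated time t,
  and whenever the root can fail, to one whose root has status Fail.  Children are rewritten
  independently inside their parent; the gate then absorbs its decided children along its
  pending list, which computes the maximum for AND, the sum for SAND and the chosen child's time
  for OR.  A failing SAND gate needs every child before the failing one to be decided, which is
  where totality of the semantics (every subtree can succeed or fail) enters.  The END rule then
  yields the summary, which is irreducible.
*)

theory Submission
  imports Defs
begin

abbreviation obj_steps :: "obj \<Rightarrow> obj \<Rightarrow> bool" where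
  "obj_steps \<equiv> obj_step\<^sup>*\<^sup>*"

definition reaches_succeed :: "obj \<Rightarrow> nat \<Rightarrow> bool" where
  "reaches_succeed x t \<longleftrightarrow> (\<exists>y. obj_steps x y \<and> ostatus y = Succeed \<and> oacctime y = t)"

definition reaches_fail :: "obj \<Rightarrow> bool" where
  "reaches_fail x \<longleftrightarrow> (\<exists>y. obj_steps x y \<and> ostatus y = Fail)"

lemma reaches_succeed_steps:
  "obj_steps x y \<Longrightarrow> reaches_succeed y t \<Longrightarrow> reaches_succeed x t"
  unfolding reaches_succeed_def by (blast intro: rtranclp_trans)

lemma reaches_fail_steps:
  "obj_steps x y \<Longrightarrow> reaches_fail y \<Longrightarrow> reaches_fail x"
  unfolding reaches_fail_def by (blast intro: rtranclp_trans)

lemma reaches_succeed_step: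
  "node_step x y \<Longrightarrow> ostatus y = Succeed \<Longrightarrow> reaches_succeed x (oacctime y)"
  unfolding reaches_succeed_def by (blast intro: obj_step.here)

lemma reaches_fail_step:
  "node_step x y \<Longrightarrow> ostatus y = Fail \<Longrightarrow> reaches_fail x"
  unfolding reaches_fail_def by (blast intro: obj_step.here)

lemma obj_steps_child:
  assumes "obj_steps (ch ! i) y" "i < length ch"
  shows "obj_steps (Obj k t c a at ac u d s ch p) (Obj k t c a at ac u d s (ch[i := y]) p)"
  using assms(1)
proof (induction rule: rtranclp_induct)
  case base
  then show ?case by simp
next
  case (step y z)
  have "obj_step (Obj k t c a at ac u d s (ch[i := y]) p)
                 (Obj k t c a at ac u d s ((ch[i := y])[i := z]) p)"
    by (rule obj_step.inside) (use step assms(2) in auto)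
  with step.IH show ?case by simp
qed

lemma obj_steps_children:
  assumes "length ds = length ch" "\<forall>i<length ch. obj_steps (ch ! i) (ds ! i)"
  shows "obj_steps (Obj k t c a at ac u d s ch p) (Obj k t c a at ac u d s ds p)"
proof -
  let ?Q = "\<lambda>n. Obj k t c a at ac u d s (take n ds @ drop n ch) p"
  have "obj_steps (?Q 0) (?Q n)" if "n \<le> length ch" for n
    using that
  proof (induction n)
    case 0
    then show ?case by simp
  next
    case (Suc n)
    let ?l = "take n ds @ drop n ch"
    have "?l ! n = ch ! n"
      using Suc.prems assms(1) by (simp add: nth_append)
    moreover have "?l[n := ds ! n] = take (Suc n) ds @ drop (Suc n) ch"
      using Suc.prems assms(1)
      by (simp add: list_update_append take_Suc_conv_app_nth Cons_nth_drop_Suc[symmetric] min_def)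
    ultimately have "obj_steps (?Q n) (?Q (Suc n))"
      using obj_steps_child[of ?l n "ds ! n"] Suc.prems assms by simp
    with Suc show ?case by (meson Suc_leD rtranclp_trans)
  qed
  from this[of "length ch"] assms(1) show ?thesis by simp
qed

lemma obj_steps_children_choose:
  assumes "\<forall>i<length ch. \<exists>y. obj_steps (ch ! i) y \<and> P i y"
  obtains ds where "length ds = length ch" "\<forall>i<length ch. P i (ds ! i)"
    "obj_steps (Obj k t c a at ac u d s ch p) (Obj k t c a at ac u d s ds p)"
proof -
  from assms obtain ds where "length ds = length ch"
    "\<forall>i<length ch. obj_steps (ch ! i) (ds ! i) \<and> P i (ds ! i)"
    unfolding Skolem_list_nth by blast
  with obj_steps_children that show ?thesis by blast
qed

lemma or_reaches_fail_of_failed_children: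
  assumes "distinct p" "\<forall>i\<in>set p. i < length ch \<and> ostatus (ch ! i) = Fail"
  shows "reaches_fail (Obj KOr t c a at ac u d Unknown ch p)"
  using assms
proof (induction p)
  case Nil
  show ?case using reaches_fail_step[OF node_step.or_fail] by simp
next
  case (Cons i p)
  have "obj_step (Obj KOr t c a at ac u d Unknown ch (i # p))
                 (Obj KOr t c a at ac u d Unknown ch (removeAll i (i # p)))"
    using Cons.prems by (intro obj_step.here node_step.or_rm) auto
  moreover have "removeAll i (i # p) = p"
    using Cons.prems by simp
  ultimately show ?case
    using Cons by (auto intro: reaches_fail_steps)
qed

lemma and_reaches_succeed_of_succeeded_children:
  assumes "distinct p" "\<forall>i\<in>set p. i < length ch \<and> ostatus (ch ! i) = Succeed"
  shows "reaches_succeed (Obj KAnd t c a at ac u d Unknown ch p)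
           (t + fold max (map (\<lambda>i. oacctime (ch ! i)) p) at)"
  using assms
proof (induction p arbitrary: a at ac u d)
  case Nil
  show ?case using reaches_succeed_step[OF node_step.and_succ] by simp
next
  case (Cons i p)
  let ?x = "ch ! i"
  have "obj_step (Obj KAnd t c a at ac u d Unknown ch (i # p))
          (Obj KAnd t c (a + oagents ?x) (max at (oacctime ?x)) (ac + oacccost ?x)
               (u \<union> oused ?x) (d \<union> odefs ?x) Unknown ch (removeAll i (i # p)))"
    using Cons.prems by (intro obj_step.here node_step.and_rm) auto
  moreover have "removeAll i (i # p) = p"
    using Cons.prems by simp
  ultimately show ?case
    using Cons by (auto intro: reaches_succeed_steps simp: max.commute)
qed

lemma sand_reaches_succeed_of_succeeded_children:
  assumes "\<forall>i\<in>set p. i < length ch \<and> ostatus (ch ! i) = Succeed"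
  shows "reaches_succeed (Obj KSand t c a at ac u d Unknown ch p)
           (t + at + sum_list (map (\<lambda>i. oacctime (ch ! i)) p))"
  using assms
proof (induction p arbitrary: a at ac u d)
  case Nil
  show ?case using reaches_succeed_step[OF node_step.sand_succ] by simp
next
  case (Cons i p)
  let ?x = "ch ! i"
  have "obj_step (Obj KSand t c a at ac u d Unknown ch (i # p))
          (Obj KSand t c (max a (oagents ?x)) (at + oacctime ?x) (ac + oacccost ?x)
               (u \<union> oused ?x) (d \<union> odefs ?x) Unknown ch p)"
    using Cons.prems by (auto intro!: obj_step.here node_step.sand_rm)
  moreover have "reaches_succeed (Obj KSand t c (max a (oagents ?x)) (at + oacctime ?x)
      (ac + oacccost ?x) (u \<union> oused ?x) (d \<union> odefs ?x) Unknown ch p)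
      (t + (at + oacctime ?x) + sum_list (map (\<lambda>i. oacctime (ch ! i)) p))"
    using Cons by simp
  ultimately show ?case
    by (auto dest: reaches_succeed_steps[OF r_into_rtranclp] simp: add.assoc)
qed

lemma sand_reaches_fail_of_decided_children:
  assumes "\<forall>i\<in>set p. i < length ch \<and> ostatus (ch ! i) \<noteq> Unknown"
    and "\<exists>i\<in>set p. ostatus (ch ! i) = Fail"
  shows "reaches_fail (Obj KSand t c a at ac u d Unknown ch p)"
  using assms
proof (induction p arbitrary: a at ac u d)
  case Nil
  then show ?case by simp
next
  case (Cons i p)
  show ?case
  proof (cases "ostatus (ch ! i)")
    case Fail
    then show ?thesis
      using Cons.prems by (auto intro!: reaches_fail_step[OF node_step.sand_fail])
  next
    case Succeed
    let ?x = "ch ! i"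
    have "obj_step (Obj KSand t c a at ac u d Unknown ch (i # p))
            (Obj KSand t c (max a (oagents ?x)) (at + oacctime ?x) (ac + oacccost ?x)
                 (u \<union> oused ?x) (d \<union> odefs ?x) Unknown ch p)"
      using Cons.prems Succeed by (auto intro!: obj_step.here node_step.sand_rm)
    then show ?thesis
      using Cons Succeed by (auto intro: reaches_fail_steps)
  next
    case Unknown
    with Cons.prems show ?thesis by simp
  qed
qed

lemma or_reaches_succeed:
  assumes "i \<in> set p" "i < length ch" "reaches_succeed (ch ! i) ti"
  shows "reaches_succeed (Obj KOr t c a at ac u d Unknown ch p) (t + ti)"
proof -
  from assms(3) obtain y where y: "obj_steps (ch ! i) y" "ostatus y = Succeed" "oacctime y = ti"
    unfolding reaches_succeed_def by blast
  let ?ch = "ch[i := y]"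
  have "reaches_succeed (Obj KOr t c a at ac u d Unknown ?ch p) (t + ti)"
    using reaches_succeed_step[OF node_step.or_succ[of i p ?ch]] assms y by simp
  with obj_steps_child[OF y(1) assms(2)] show ?thesis
    by (rule reaches_succeed_steps)
qed

lemma or_reaches_fail:
  assumes "\<forall>i<length ch. reaches_fail (ch ! i)"
  shows "reaches_fail (Obj KOr t c a at ac u d Unknown ch [0..<length ch])"
proof -
  from assms obtain ds where "length ds = length ch" "\<forall>i<length ch. ostatus (ds ! i) = Fail"
    and "obj_steps (Obj KOr t c a at ac u d Unknown ch [0..<length ch])
                   (Obj KOr t c a at ac u d Unknown ds [0..<length ch])"
    unfolding reaches_fail_def by (rule obj_steps_children_choose)
  then show ?thesis
    using or_reaches_fail_of_failed_children[of "[0..<length ch]" ds]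
    by (auto intro: reaches_fail_steps)
qed

lemma and_reaches_succeed:
  assumes "length ts = length ch" "\<forall>i<length ch. reaches_succeed (ch ! i) (ts ! i)"
  shows "reaches_succeed (Obj KAnd t c a at ac u d Unknown ch [0..<length ch])
           (t + fold max ts at)"
proof -
  from assms(2) obtain ds where ds: "length ds = length ch"
      "\<forall>i<length ch. ostatus (ds ! i) = Succeed \<and> oacctime (ds ! i) = ts ! i"
    and "obj_steps (Obj KAnd t c a at ac u d Unknown ch [0..<length ch])
                   (Obj KAnd t c a at ac u d Unknown ds [0..<length ch])"
    unfolding reaches_succeed_def by (rule obj_steps_children_choose)
  moreover have "map (\<lambda>i. oacctime (ds ! i)) [0..<length ch] = ts"
    using ds assms(1) by (intro nth_equalityI) auto
  ultimately show ?thesis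
    using and_reaches_succeed_of_succeeded_children[of "[0..<length ch]" ds]
    by (auto intro: reaches_succeed_steps)
qed

lemma and_reaches_fail:
  assumes "i \<in> set p" "i < length ch" "reaches_fail (ch ! i)"
  shows "reaches_fail (Obj KAnd t c a at ac u d Unknown ch p)"
proof -
  from assms(3) obtain y where y: "obj_steps (ch ! i) y" "ostatus y = Fail"
    unfolding reaches_fail_def by blast
  have "reaches_fail (Obj KAnd t c a at ac u d Unknown (ch[i := y]) p)"
    using reaches_fail_step[OF node_step.and_fail[of i p "ch[i := y]"]] assms y by simp
  with obj_steps_child[OF y(1) assms(2)] show ?thesis
    by (rule reaches_fail_steps)
qed

lemma sand_reaches_succeed:
  assumes "length ts = length ch" "\<forall>i<length ch. reaches_succeed (ch ! i) (ts ! i)"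
  shows "reaches_succeed (Obj KSand t c a at ac u d Unknown ch [0..<length ch])
           (t + at + sum_list ts)"
proof -
  from assms(2) obtain ds where ds: "length ds = length ch"
      "\<forall>i<length ch. ostatus (ds ! i) = Succeed \<and> oacctime (ds ! i) = ts ! i"
    and "obj_steps (Obj KSand t c a at ac u d Unknown ch [0..<length ch])
                   (Obj KSand t c a at ac u d Unknown ds [0..<length ch])"
    unfolding reaches_succeed_def by (rule obj_steps_children_choose)
  moreover have "map (\<lambda>i. oacctime (ds ! i)) [0..<length ch] = ts"
    using ds assms(1) by (intro nth_equalityI) auto
  ultimately show ?thesis
    using sand_reaches_succeed_of_succeeded_children[of "[0..<length ch]" ds]
    by (auto intro: reaches_succeed_steps)
qed

lemma sand_reaches_fail:
  assumes "\<forall>i<length ch. (\<exists>ti. reaches_succeed (ch ! i) ti) \<or> reaches_fail (ch ! i)"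
    and "j < length ch" "reaches_fail (ch ! j)"
  shows "reaches_fail (Obj KSand t c a at ac u d Unknown ch [0..<length ch])"
proof -
  have "\<forall>i<length ch. \<exists>y. obj_steps (ch ! i) y \<and>
          ostatus y \<noteq> Unknown \<and> (i = j \<longrightarrow> ostatus y = Fail)"
  proof (intro allI impI)
    fix i
    assume "i < length ch"
    with assms(1,3) consider ti where "i \<noteq> j" "reaches_succeed (ch ! i) ti"
      | "reaches_fail (ch ! i)"
      by blast
    then show "\<exists>y. obj_steps (ch ! i) y \<and> ostatus y \<noteq> Unknown \<and> (i = j \<longrightarrow> ostatus y = Fail)"
      unfolding reaches_succeed_def reaches_fail_def by cases auto
  qed
  then obtain ds where ds: "length ds = length ch"
      "\<forall>i<length ch. ostatus (ds ! i) \<noteq> Unknown \<and> (i = j \<longrightarrow> ostatus (ds ! i) = Fail)"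
    and steps: "obj_steps (Obj KSand t c a at ac u d Unknown ch [0..<length ch])
                          (Obj KSand t c a at ac u d Unknown ds [0..<length ch])"
    by (rule obj_steps_children_choose)
  have "reaches_fail (Obj KSand t c a at ac u d Unknown ds [0..<length ch])"
    using ds assms(2) by (intro sand_reaches_fail_of_decided_children) auto
  with steps show ?thesis
    by (rule reaches_fail_steps)
qed

lemma not_reaches_succeed:
  assumes "reaches_fail x"
  shows "reaches_succeed (Obj KNot t c a at ac u d Unknown [x] p) t"
proof -
  from assms obtain y where y: "obj_steps x y" "ostatus y = Fail"
    unfolding reaches_fail_def by blast
  have "reaches_succeed (Obj KNot t c a at ac u d Unknown [y] p) t"
    using reaches_succeed_step[OF node_step.not_succ[OF y(2)]] by simp
  moreover have "obj_steps (Obj KNot t c a at ac u d Unknown [x] p)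
                         (Obj KNot t c a at ac u d Unknown [y] p)"
    using obj_steps_child[of "[x]" 0 y] y(1) by simp
  ultimately show ?thesis
    by (rule reaches_succeed_steps[rotated])
qed

lemma not_reaches_fail:
  assumes "reaches_succeed x tx"
  shows "reaches_fail (Obj KNot t c a at ac u d Unknown [x] p)"
proof -
  from assms obtain y where y: "obj_steps x y" "ostatus y = Succeed"
    unfolding reaches_succeed_def by blast
  have "reaches_fail (Obj KNot t c a at ac u d Unknown [y] p)"
    using reaches_fail_step[OF node_step.not_fail[OF y(2)]] by simp
  moreover have "obj_steps (Obj KNot t c a at ac u d Unknown [x] p)
                         (Obj KNot t c a at ac u d Unknown [y] p)"
    using obj_steps_child[of "[x]" 0 y] y(1) by simp
  ultimately show ?thesis
    by (rule reaches_fail_steps[rotated])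
qed

inductive_cases succ_AtkE: "succ (Atk n t c) x"
inductive_cases succ_DfnE: "succ (Dfn n) x"
inductive_cases succ_OrE: "succ (Or t c cs) x"
inductive_cases succ_AndE: "succ (And t c cs) x"
inductive_cases succ_SandE: "succ (Sand t c cs) x"
inductive_cases succ_NotE: "succ (Not t c y) x"
inductive_cases fails_OrE: "fails (Or t c cs)"
inductive_cases fails_AndE: "fails (And t c cs)"
inductive_cases fails_SandE: "fails (Sand t c cs)"
inductive_cases fails_NotE: "fails (Not t c y)"

lemma all_succ_or_some_fails:
  assumes "\<forall>T\<in>set cs. (\<exists>t. succ T t) \<or> fails T"
  shows "(\<exists>ts. length ts = length cs \<and> (\<forall>i<length cs. succ (cs ! i) (ts ! i)))
    \<or> (\<exists>i<length cs. fails (cs ! i))"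
proof (cases "\<exists>i<length cs. fails (cs ! i)")
  case False
  with assms have "\<forall>i<length cs. \<exists>t. succ (cs ! i) t"
    by (meson nth_mem)
  then show ?thesis
    by (simp add: Skolem_list_nth)
qed simp

lemma succ_or_fails: "(\<exists>t. succ T t) \<or> fails T"
proof (induction T)
  case (Or t c cs)
  then show ?case
    by (metis fails_or nth_mem succ_or)
next
  case (And t c cs)
  then show ?case
    using all_succ_or_some_fails[of cs] by (metis fails_and succ_and)
next
  case (Sand t c cs)
  then show ?case
    using all_succ_or_some_fails[of cs] by (metis fails_sand succ_sand)
qed (blast intro: succ_fails.intros)+

lemma enc_reaches:
  "(\<forall>t. succ T t \<longrightarrow> reaches_succeed (enc T) t) \<and> (fails T \<longrightarrow> reaches_fail (enc T))"
proof (induction T)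
  case (Atk n t c)
  show ?case
    using reaches_succeed_step[OF node_step.atk_succ] reaches_fail_step[OF node_step.atk_fail]
    by (auto elim: succ_AtkE)
next
  case (Dfn n)
  show ?case
    using reaches_succeed_step[OF node_step.dfn_succ] reaches_fail_step[OF node_step.dfn_fail]
    by (auto elim: succ_DfnE)
next
  case (Or t c cs)
  then have "\<forall>i<length cs. (\<forall>t. succ (cs ! i) t \<longrightarrow> reaches_succeed (enc (cs ! i)) t)
      \<and> (fails (cs ! i) \<longrightarrow> reaches_fail (enc (cs ! i)))"
    by simp
  then show ?case
    using or_reaches_succeed[of _ "[0..<length cs]" "map enc cs"] or_reaches_fail[of "map enc cs"]
    by (auto elim!: succ_OrE fails_OrE)
next
  case (And t c cs)
  then have "\<forall>i<length cs. (\<forall>t. succ (cs ! i) t \<longrightarrow> reaches_succeed (enc (cs ! i)) t)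
      \<and> (fails (cs ! i) \<longrightarrow> reaches_fail (enc (cs ! i)))"
    by simp
  then show ?case
    using and_reaches_succeed[of _ "map enc cs"] and_reaches_fail[of _ "[0..<length cs]" "map enc cs"]
    by (auto elim!: succ_AndE fails_AndE)
next
  case (Sand t c cs)
  then have IH: "\<forall>i<length cs. (\<forall>t. succ (cs ! i) t \<longrightarrow> reaches_succeed (enc (cs ! i)) t)
      \<and> (fails (cs ! i) \<longrightarrow> reaches_fail (enc (cs ! i)))"
    by simp
  then have "\<forall>i<length cs. (\<exists>ti. reaches_succeed (enc (cs ! i)) ti) \<or> reaches_fail (enc (cs ! i))"
    using succ_or_fails by blast
  with IH show ?case
    using sand_reaches_succeed[of _ "map enc cs" _ _ _ 0] sand_reaches_fail[of "map enc cs"]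
    by (auto elim!: succ_SandE fails_SandE)
next
  case (Not t c x)
  then show ?case
    using not_reaches_succeed not_reaches_fail by (auto elim!: succ_NotE fails_NotE)
qed

lemma rstep_Conf_steps: "obj_steps x y \<Longrightarrow> rstep\<^sup>*\<^sup>* (Conf x) (Conf y)"
  by (induction rule: rtranclp_induct) (auto intro: rtranclp.rtrancl_into_rtrancl rstep.conf)

lemma Summary_irreducible: "\<not> rstep (Summary a t SA SD) v"
  by (auto elim: rstep.cases)

theorem theorem2:
  fixes T :: adt and t :: nat
  assumes "min_attack_time T t"
  shows "\<exists>a SA SD. rewrites_nf (encode T) (Summary a t SA SD)"
proof -
  from assms have "succ T t"
    unfolding min_attack_time_def by blast
  with enc_reaches obtain x where x: "obj_steps (enc T) x" "ostatus x = Succeed" "oacctime x = t"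
    unfolding reaches_succeed_def by blast
  have "rstep\<^sup>*\<^sup>* (encode T) (Summary (oagents x) t (oused x) (odefs x))"
    using rstep_Conf_steps[OF x(1)] rstep.END[OF x(2)] x(3) unfolding encode_def
    by (metis rtranclp.rtrancl_into_rtrancl)
  with Summary_irreducible show ?thesis
    unfolding rewrites_nf_def by blast
qed

end
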